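(* Suppose $n$ is odd. Let $\ell$ be the smallest integer $\ge0$ such that $a_{\ell+1}\neq0$, and let $\lambda:=[\ell/2]$. Then the $(n+1)/2$ functions $J_1,\dots,J_\lambda,\ H,\ F_{\lambda+2},F_{\lambda+3},\dots,F_{(n-1)/2},\ C$ are pairwise in involution with respect to $\{\cdot,\cdot\}$ and functionally independent (their differentials are linearly independent on a dense open subset of $\mathbb R^n$). Hence they define a Liouville integrable system on $(\mathbb R^n,\{\cdot,\cdot\})$ (whose Poisson structure has rank $n-1$).
   Context: Let $n\ge1$, $(a_1,\dots,a_n)\in\mathbb R^n\setminus\{0\}$. On $\mathbb R^n$ with coordinates $x_1,\dots,x_n$ consider the Poisson bracket $\{x_i,x_j\}=x_ix_j$ for $1\le i<j\le n$ (extended by skew-symmetry and the Leibniz rule; rational functions are considered on the open dense set where their denominators do not vanish). Let $H=a_1x_1+\dots+a_nx_n$, $v_0:=0$ and $v_i:=a_1x_1+\dots+a_ix_i$ for $i=1,\dots,n$. For $k=1,\dots,[n/2]$ let $J_k:=\dfrac{x_1x_3\cdots x_{2k-1}}{x_2x_4\cdots x_{2k}}$. For $n$ odd and $k=1,\dots,(n+1)/2$ let $F_k:=v_{2k-1}\dfrac{x_{2k+1}x_{2k+3}\cdots x_n}{x_{2k}x_{2k+2}\cdots x_{n-1}}$ (empty product $=1$, so $F_{(n+1)/2}=H$), and let $C:=\dfrac{x_1x_3\cdots x_n}{x_2x_4\cdots x_{n-1}}$. *)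

theory Defs
  imports "HOL-Analysis.Analysis"
begin

text \<open>Points of R^n are modelled as functions x :: nat => real, where x i is the
coordinate x_i for 1 <= i <= n; R^n itself is the subspace Rn n of those x that
vanish outside {1..n}, with the (product) topology inherited from nat => real,
which on Rn n is the Euclidean topology.\<close>

definition Rn :: "nat \<Rightarrow> (nat \<Rightarrow> real) set" where
  "Rn n = {x. \<forall>i. i \<notin> {1..n} \<longrightarrow> x i = 0}"

text \<open>Open dense set on which all rational functions involved are defined (all
coordinates nonzero).\<close>
definition torus :: "nat \<Rightarrow> (nat \<Rightarrow> real) set" where
  "torus n = {x \<in> Rn n. \<forall>i\<in>{1..n}. x i \<noteq> 0}"

definition pd :: "((nat \<Rightarrow> real) \<Rightarrow> real) \<Rightarrow> nat \<Rightarrow> (nat \<Rightarrow> real) \<Rightarrow> real" where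
  "pd f i x = deriv (\<lambda>t. f (x(i := t))) (x i)"

definition ptensor :: "nat \<Rightarrow> nat \<Rightarrow> (nat \<Rightarrow> real) \<Rightarrow> real" where
  "ptensor i j x = (if i < j then x i * x j else if j < i then - (x i * x j) else 0)"

definition pbracket :: "nat \<Rightarrow> ((nat \<Rightarrow> real) \<Rightarrow> real) \<Rightarrow> ((nat \<Rightarrow> real) \<Rightarrow> real)
    \<Rightarrow> (nat \<Rightarrow> real) \<Rightarrow> real" where
  "pbracket n f g x = (\<Sum>i=1..n. \<Sum>j=1..n. ptensor i j x * pd f i x * pd g j x)"

definition vv :: "(nat \<Rightarrow> real) \<Rightarrow> nat \<Rightarrow> (nat \<Rightarrow> real) \<Rightarrow> real" where
  "vv a i x = (\<Sum>j=1..i. a j * x j)"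

definition HH :: "(nat \<Rightarrow> real) \<Rightarrow> nat \<Rightarrow> (nat \<Rightarrow> real) \<Rightarrow> real" where
  "HH a n x = vv a n x"

definition JJ :: "nat \<Rightarrow> (nat \<Rightarrow> real) \<Rightarrow> real" where
  "JJ k x = (\<Prod>i=1..k. x (2*i - 1)) / (\<Prod>i=1..k. x (2*i))"

definition FF :: "(nat \<Rightarrow> real) \<Rightarrow> nat \<Rightarrow> nat \<Rightarrow> (nat \<Rightarrow> real) \<Rightarrow> real" where
  "FF a n k x = vv a (2*k - 1) x * (\<Prod>i\<in>{k..(n-1) div 2}. x (2*i + 1))
                 / (\<Prod>i\<in>{k..(n-1) div 2}. x (2*i))"

definition CC :: "nat \<Rightarrow> (nat \<Rightarrow> real) \<Rightarrow> real" where
  "CC n x = (\<Prod>i\<in>{0..(n-1) div 2}. x (2*i + 1)) / (\<Prod>i\<in>{1..(n-1) div 2}. x (2*i))"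

definition fam :: "(nat \<Rightarrow> real) \<Rightarrow> nat \<Rightarrow> nat \<Rightarrow> ((nat \<Rightarrow> real) \<Rightarrow> real) list" where
  "fam a n lam = map (\<lambda>k. JJ k) [1..<lam + 1] @ [HH a n]
      @ map (\<lambda>k. FF a n k) [lam + 2..<(n - 1) div 2 + 1] @ [CC n]"

definition diffs_indep :: "nat \<Rightarrow> ((nat \<Rightarrow> real) \<Rightarrow> real) list \<Rightarrow> (nat \<Rightarrow> real) \<Rightarrow> bool" where
  "diffs_indep n fs x \<longleftrightarrow>
     (\<forall>c :: nat \<Rightarrow> real. (\<forall>i\<in>{1..n}. (\<Sum>k<length fs. c k * pd (fs ! k) i x) = 0)
        \<longrightarrow> (\<forall>k<length fs. c k = 0))"

end

theory Submission
  imports Defs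
begin

text \<open>
  Everything is computed with logarithmic derivatives \<open>x\<^sub>i \<partial>\<^sub>i f\<close>, in which the bracket
  reads \<open>{f,g} = \<Sum>\<^sub>i\<^sub>,\<^sub>j sgn(j-i) (x\<^sub>i \<partial>\<^sub>i f)(x\<^sub>j \<partial>\<^sub>j g)\<close>. The functions \<open>J\<^sub>k\<close>, \<open>C\<close> and the
  monomial factors of the \<open>F\<^sub>k\<close> are alternating Laurent monomials, whose logarithmic
  gradients are \<open>\<plusminus>1\<close> on an interval of indices; applying the sign matrix to such a
  vector gives an indicator of a prefix or suffix (and \<open>0\<close> for \<open>C\<close>, which is a
  Casimir). This reduces all brackets to short telescoping sums. In particular
  \<open>{J\<^sub>k, g}\<close> is \<open>J\<^sub>k\<close> times the Euler derivative of \<open>g\<close> in \<open>x\<^sub>1,\<dots>,x\<^sub>2\<^sub>k\<close>, which kills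
  \<open>H\<close> and the \<open>F\<^sub>l\<close> because \<open>a\<^sub>1 = \<dots> = a\<^sub>\<ell> = 0\<close>.

  Independence is triangular: pairing the coordinates \<open>2j\<close> and \<open>2j+1\<close> of a linear
  relation among the logarithmic gradients successively forces the coefficients of
  \<open>C\<close>, \<open>F\<^sub>\<lambda>\<^sub>+\<^sub>2, \<dots>, F\<^sub>(\<^sub>n\<^sub>-\<^sub>1\<^sub>)\<^sub>/\<^sub>2\<close>, then \<open>H\<close> (coordinate \<open>\<ell>+1\<close>) and finally the \<open>J\<^sub>k\<close> to
  vanish, at every point of the torus where finitely many nonzero linear forms
  do not vanish; that set is open and dense.
\<close>

section \<open>Logarithmic gradients\<close>

lemma pd_eq_of_affine:
  assumes "\<And>t. f (x(i:=t)) = f x + c * (t - x i)"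
  shows "pd f i x = c"
proof -
  have e: "(\<lambda>t. f (x(i:=t))) = (\<lambda>t. f x + c * (t - x i))" using assms by auto
  have "((\<lambda>t. f x + c * (t - x i)) has_field_derivative c) (at (x i))"
    by (auto intro!: derivative_eq_intros)
  then show ?thesis unfolding pd_def e by (rule DERIV_imp_deriv)
qed

definition log_grad :: "((nat \<Rightarrow> real) \<Rightarrow> real) \<Rightarrow> (nat \<Rightarrow> real) \<Rightarrow> nat \<Rightarrow> real" where
  "log_grad f x i = x i * pd f i x"

lemma log_grad_of_ratio:
  assumes xi: "x i \<noteq> 0" and AB: "\<not> (A \<and> B)"
    and eq: "\<And>t. t \<noteq> 0 \<Longrightarrow> f (x(i:=t)) = f x * (if A then t else x i) / (if B then t else x i)"
  shows "log_grad f x i = (if A then 1 else if B then -1 else 0) * f x"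
proof -
  have xin: "x i \<in> - {0::real}" using xi by auto
  have op: "open (- {0::real})" by auto
  consider "A" "\<not> B" | "B" "\<not> A" | "\<not>A" "\<not>B" using AB by blast
  then show ?thesis
  proof cases
    case 1
    have d: "((\<lambda>t. f x * t / x i) has_field_derivative f x / x i) (at (x i))"
      using xi by (auto intro!: derivative_eq_intros)
    have "((\<lambda>t. f (x(i:=t))) has_field_derivative f x / x i) (at (x i))"
      by (rule has_field_derivative_transform_within_open[OF d op xin]) (use eq 1 xi in auto)
    then have "pd f i x = f x / x i" unfolding pd_def by (rule DERIV_imp_deriv)
    then show ?thesis using 1 xi by (simp add: log_grad_def)
  next
    case 2
    have d: "((\<lambda>t. f x * x i / t) has_field_derivative - (f x * x i) / (x i * x i)) (at (x i))"
      using xi by (auto intro!: derivative_eq_intros simp: power2_eq_square)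
    have "((\<lambda>t. f (x(i:=t))) has_field_derivative - (f x * x i) / (x i * x i)) (at (x i))"
      by (rule has_field_derivative_transform_within_open[OF d op xin]) (use eq 2 in auto)
    then have "pd f i x = - (f x * x i) / (x i * x i)" unfolding pd_def by (rule DERIV_imp_deriv)
    then show ?thesis using 2 xi by (simp add: log_grad_def)
  next
    case 3
    have d: "((\<lambda>t. f x) has_field_derivative 0) (at (x i))"
      by (auto intro!: derivative_eq_intros)
    have "((\<lambda>t. f (x(i:=t))) has_field_derivative 0) (at (x i))"
      by (rule has_field_derivative_transform_within_open[OF d op xin]) (use eq 3 xi in auto)
    then have "pd f i x = 0" unfolding pd_def by (rule DERIV_imp_deriv)
    then show ?thesis using 3 by (simp add: log_grad_def)
  qed
qed

lemma prod_fun_upd_times: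
  assumes "finite P" "inj_on g P"
  shows "(\<Prod>p\<in>P. (x(i:=t)) (g p)) * x i = (\<Prod>p\<in>P. x (g p)) * (if i \<in> g ` P then t else x i)"
proof (cases "i \<in> g ` P")
  case True
  then obtain q where q: "q \<in> P" "g q = i" by auto
  have o: "\<And>p. p \<in> P - {q} \<Longrightarrow> (x(i:=t)) (g p) = x (g p)"
    using assms(2) q by (auto dest: inj_onD)
  have "(\<Prod>p\<in>P. (x(i:=t)) (g p)) = (x(i:=t)) (g q) * (\<Prod>p\<in>P-{q}. (x(i:=t)) (g p))"
    by (rule prod.remove[OF assms(1) q(1)])
  also have "\<dots> = t * (\<Prod>p\<in>P-{q}. x (g p))" using q o by simp
  finally have 1: "(\<Prod>p\<in>P. (x(i:=t)) (g p)) = t * (\<Prod>p\<in>P-{q}. x (g p))" .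
  have 2: "(\<Prod>p\<in>P. x (g p)) = x (g q) * (\<Prod>p\<in>P-{q}. x (g p))"
    by (rule prod.remove[OF assms(1) q(1)])
  show ?thesis using 1 2 True q by (simp add: mult_ac)
next
  case False
  then have "\<And>p. p \<in> P \<Longrightarrow> (x(i:=t)) (g p) = x (g p)" by auto
  then show ?thesis using False by simp
qed

lemma divide_eq_of_update:
  assumes "xi \<noteq> 0" "Nt * xi = N * rA" "Dt * xi = D * rB"
  shows "Nt / Dt = N / D * rA / (rB::real)"
proof -
  have "Nt = N * rA / xi" by (metis assms(1) assms(2) nonzero_mult_div_cancel_right)
  moreover have "Dt = D * rB / xi" by (metis assms(1) assms(3) nonzero_mult_div_cancel_right)
  ultimately show ?thesis using assms(1) by simp
qed

lemma mem_image_double_minus_one: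
  "(i::nat) \<in> (\<lambda>p. 2*p - 1) ` {1..k} \<longleftrightarrow> odd i \<and> 1 \<le> i \<and> i \<le> 2*k"
proof
  assume "odd i \<and> 1 \<le> i \<and> i \<le> 2*k"
  then show "i \<in> (\<lambda>p. 2*p - 1) ` {1..k}"
    by (intro image_eqI[of _ _ "(i+1) div 2"]) (auto elim!: oddE)
qed auto

lemma mem_image_double:
  "(i::nat) \<in> (\<lambda>p. 2*p) ` {lo..k} \<longleftrightarrow> even i \<and> 2*lo \<le> i \<and> i \<le> 2*k"
proof
  assume "even i \<and> 2*lo \<le> i \<and> i \<le> 2*k"
  then show "i \<in> (\<lambda>p. 2*p) ` {lo..k}"
    by (intro image_eqI[of _ _ "i div 2"]) (auto elim!: evenE)
qed auto

lemma mem_image_double_plus_one: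
  "(i::nat) \<in> (\<lambda>p. 2*p+1) ` {lo..k} \<longleftrightarrow> odd i \<and> 2*lo+1 \<le> i \<and> i \<le> 2*k+1"
proof
  assume "odd i \<and> 2*lo+1 \<le> i \<and> i \<le> 2*k+1"
  then show "i \<in> (\<lambda>p. 2*p+1) ` {lo..k}"
    by (intro image_eqI[of _ _ "i div 2"]) (auto elim!: oddE)
qed auto

lemma inj_on_double_minus_one: "inj_on (\<lambda>p::nat. 2*p - 1) {1..k}"
  by (auto simp: inj_on_def)

lemma inj_on_double: "inj_on (\<lambda>p::nat. 2*p) S"
  by (auto simp: inj_on_def)

lemma inj_on_double_plus_one: "inj_on (\<lambda>p::nat. 2*p+1) S"
  by (auto simp: inj_on_def)

definition parity_sign :: "nat \<Rightarrow> real" where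
  "parity_sign i = (if odd i then 1 else -1)"

text \<open>\<open>alt_exp lo hi\<close> is the exponent vector of \<open>x\<^sub>l\<^sub>o\<^sup>\<plusminus>\<^sup>1 x\<^sub>l\<^sub>o\<^sub>+\<^sub>1\<^sup>\<minus>\<^sup>1 \<cdots> x\<^sub>h\<^sub>i\<^sup>\<plusminus>\<^sup>1\<close> with the
  odd-indexed variables in the numerator; it is the logarithmic gradient of that
  monomial divided by the monomial.\<close>

definition alt_exp :: "nat \<Rightarrow> nat \<Rightarrow> nat \<Rightarrow> real" where
  "alt_exp lo hi i = (if lo \<le> i \<and> i \<le> hi then parity_sign i else 0)"

lemma log_grad_JJ:
  assumes xi: "x i \<noteq> 0"
  shows "log_grad (JJ k) x i = JJ k x * alt_exp 1 (2*k) i"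
proof -
  let ?A = "i \<in> (\<lambda>p. 2*p-1) ` {1..k}"
  let ?B = "i \<in> (\<lambda>p. 2*p) ` {1..k}"
  have eq: "JJ k (x(i:=t)) = JJ k x * (if ?A then t else x i) / (if ?B then t else x i)" for t
    unfolding JJ_def
    by (rule divide_eq_of_update[OF xi
          prod_fun_upd_times[where x=x and i=i and t=t, OF finite_atLeastAtMost inj_on_double_minus_one]
          prod_fun_upd_times[where x=x and i=i and t=t, OF finite_atLeastAtMost inj_on_double]])
  have AB: "\<not>(?A \<and> ?B)" by (auto simp: mem_image_double_minus_one mem_image_double)
  show ?thesis
    using log_grad_of_ratio[OF xi AB eq]
    unfolding mem_image_double_minus_one mem_image_double by (auto simp: alt_exp_def parity_sign_def)
qed

lemma log_grad_CC:
  assumes xi: "x i \<noteq> 0" and n: "odd n"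
  shows "log_grad (CC n) x i = CC n x * alt_exp 1 n i"
proof -
  let ?m = "(n-1) div 2"
  let ?A = "i \<in> (\<lambda>p. 2*p+1) ` {0..?m}"
  let ?B = "i \<in> (\<lambda>p. 2*p) ` {1..?m}"
  have eq: "CC n (x(i:=t)) = CC n x * (if ?A then t else x i) / (if ?B then t else x i)" for t
    unfolding CC_def
    by (rule divide_eq_of_update[OF xi
          prod_fun_upd_times[where x=x and i=i and t=t, OF finite_atLeastAtMost inj_on_double_plus_one]
          prod_fun_upd_times[where x=x and i=i and t=t, OF finite_atLeastAtMost inj_on_double]])
  have AB: "\<not>(?A \<and> ?B)" by (auto simp: mem_image_double_plus_one mem_image_double)
  have "2 * ?m + 1 = n" using n by presburger
  then show ?thesis
    using log_grad_of_ratio[OF xi AB eq]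
    unfolding mem_image_double_plus_one mem_image_double by (auto simp: alt_exp_def parity_sign_def; presburger)
qed

definition FF_monomial :: "nat \<Rightarrow> nat \<Rightarrow> (nat \<Rightarrow> real) \<Rightarrow> real" where
  "FF_monomial n k x = (\<Prod>i\<in>{k..(n-1) div 2}. x (2*i + 1)) / (\<Prod>i\<in>{k..(n-1) div 2}. x (2*i))"

lemma FF_eq_vv_times_monomial: "FF a n k x = vv a (2*k-1) x * FF_monomial n k x"
  unfolding FF_def FF_monomial_def by simp

lemma FF_monomial_fun_upd:
  assumes xi: "x i \<noteq> 0"
  shows "FF_monomial n k (x(i:=t)) = FF_monomial n k x
      * (if i \<in> (\<lambda>p. 2*p+1) ` {k..(n-1) div 2} then t else x i)
      / (if i \<in> (\<lambda>p. 2*p) ` {k..(n-1) div 2} then t else x i)"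
  unfolding FF_monomial_def
  by (rule divide_eq_of_update[OF xi
        prod_fun_upd_times[where x=x and i=i and t=t, OF finite_atLeastAtMost inj_on_double_plus_one]
        prod_fun_upd_times[where x=x and i=i and t=t, OF finite_atLeastAtMost inj_on_double]])

lemma vv_fun_upd:
  "vv a r (x(i:=t)) = vv a r x + (if 1 \<le> i \<and> i \<le> r then a i * (t - x i) else 0)"
proof -
  have "\<And>j. a j * (x(i:=t)) j = a j * x j + (if j = i then a i * (t - x i) else 0)"
    by (auto simp: algebra_simps)
  then have "vv a r (x(i:=t)) = (\<Sum>j=1..r. a j * x j + (if j = i then a i * (t - x i) else 0))"
    unfolding vv_def by simp
  also have "\<dots> = vv a r x + (if 1 \<le> i \<and> i \<le> r then a i * (t - x i) else 0)"
    unfolding vv_def sum.distrib by simp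
  finally show ?thesis .
qed

definition vv_terms :: "(nat \<Rightarrow> real) \<Rightarrow> nat \<Rightarrow> (nat \<Rightarrow> real) \<Rightarrow> nat \<Rightarrow> real" where
  "vv_terms a p x i = (if 1 \<le> i \<and> i \<le> p then a i * x i else 0)"

lemma log_grad_HH: "log_grad (HH a n) x i = vv_terms a n x i"
proof -
  have "HH a n (x(i:=t)) = HH a n x + (if 1 \<le> i \<and> i \<le> n then a i else 0) * (t - x i)" for t
    unfolding HH_def vv_fun_upd by simp
  then have "pd (HH a n) i x = (if 1 \<le> i \<and> i \<le> n then a i else 0)" by (rule pd_eq_of_affine)
  then show ?thesis by (simp add: log_grad_def vv_terms_def)
qed

lemma log_grad_FF:
  assumes xi: "x i \<noteq> 0" and n: "odd n" and k: "1 \<le> k"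
  shows "log_grad (FF a n k) x i
    = FF_monomial n k x * vv_terms a (2*k-1) x i + FF a n k x * alt_exp (2*k) n i"
proof (cases "1 \<le> i \<and> i \<le> 2*k-1")
  case True
  have "i \<notin> (\<lambda>p. 2*p+1) ` {k..(n-1) div 2}" "i \<notin> (\<lambda>p. 2*p) ` {k..(n-1) div 2}"
    unfolding mem_image_double_plus_one mem_image_double using True by auto
  then have "FF_monomial n k (x(i:=t)) = FF_monomial n k x" for t
    using FF_monomial_fun_upd[where x=x and i=i, OF xi] xi by simp
  then have "FF a n k (x(i:=t)) = FF a n k x + (a i * FF_monomial n k x) * (t - x i)" for t
    unfolding FF_eq_vv_times_monomial vv_fun_upd using True by (simp add: algebra_simps)
  then have "pd (FF a n k) i x = a i * FF_monomial n k x" by (rule pd_eq_of_affine)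
  moreover have "alt_exp (2*k) n i = 0" using True by (auto simp: alt_exp_def parity_sign_def)
  ultimately show ?thesis using True by (simp add: log_grad_def vv_terms_def)
next
  case False
  let ?m = "(n-1) div 2"
  let ?A = "i \<in> (\<lambda>p. 2*p+1) ` {k..?m}"
  let ?B = "i \<in> (\<lambda>p. 2*p) ` {k..?m}"
  have eq: "FF a n k (x(i:=t)) = FF a n k x * (if ?A then t else x i) / (if ?B then t else x i)" for t
  proof -
    have "vv a (2*k-1) (x(i:=t)) = vv a (2*k-1) x" unfolding vv_fun_upd if_not_P[OF False] by simp
    then show ?thesis unfolding FF_eq_vv_times_monomial FF_monomial_fun_upd[where x=x and i=i, OF xi] by simp
  qed
  have AB: "\<not>(?A \<and> ?B)" by (auto simp: mem_image_double_plus_one mem_image_double)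
  have "(if odd i \<and> 2*k+1 \<le> i \<and> i \<le> 2*?m+1 then 1
      else if even i \<and> 2*k \<le> i \<and> i \<le> 2*?m then -1 else 0) = alt_exp (2*k) n i"
    unfolding alt_exp_def parity_sign_def using n by (auto; presburger)
  moreover have "vv_terms a (2*k-1) x i = 0" unfolding vv_terms_def if_not_P[OF False] ..
  ultimately show ?thesis
    using log_grad_of_ratio[OF xi AB eq]
    unfolding mem_image_double_plus_one mem_image_double by (simp add: mult.commute)
qed

section \<open>The bracket as a skew-symmetric form\<close>

lemma torus_coord_nonzero: "x \<in> torus n \<Longrightarrow> i \<in> {1..n} \<Longrightarrow> x i \<noteq> 0"
  unfolding torus_def by auto

definition order_sign :: "nat \<Rightarrow> nat \<Rightarrow> real" where
  "order_sign i j = (if i < j then 1 else if j < i then -1 else 0)"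

definition skew_form :: "nat \<Rightarrow> (nat \<Rightarrow> real) \<Rightarrow> (nat \<Rightarrow> real) \<Rightarrow> real" where
  "skew_form n u w = (\<Sum>i=1..n. \<Sum>j=1..n. order_sign i j * u i * w j)"

definition skew_column :: "nat \<Rightarrow> (nat \<Rightarrow> real) \<Rightarrow> nat \<Rightarrow> real" where
  "skew_column n u j = (\<Sum>i=1..n. order_sign i j * u i)"

lemma pbracket_eq_skew_form: "pbracket n f g x = skew_form n (log_grad f x) (log_grad g x)"
  unfolding skew_form_def pbracket_def log_grad_def
  by (intro sum.cong refl) (auto simp: ptensor_def order_sign_def)

lemma skew_form_eq_column_sum: "skew_form n u w = (\<Sum>j=1..n. skew_column n u j * w j)"
  unfolding skew_form_def skew_column_def sum_distrib_right
  by (subst sum.swap) simp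

lemma skew_form_antisym: "skew_form n u w = - skew_form n w u"
proof -
  have "skew_form n w u = (\<Sum>i=1..n. \<Sum>j=1..n. order_sign j i * w j * u i)"
    unfolding skew_form_def by (subst sum.swap) simp
  also have "\<dots> = (\<Sum>i=1..n. \<Sum>j=1..n. - (order_sign i j * u i * w j))"
    by (intro sum.cong refl) (auto simp: order_sign_def)
  also have "\<dots> = - skew_form n u w" unfolding skew_form_def by (simp add: sum_negf)
  finally show ?thesis by simp
qed

lemma skew_form_self: "skew_form n u u = 0"
  using skew_form_antisym[of n u u] by simp

lemma skew_form_cong:
  assumes "\<And>i. i \<in> {1..n} \<Longrightarrow> u i = u' i" "\<And>i. i \<in> {1..n} \<Longrightarrow> w i = w' i"
  shows "skew_form n u w = skew_form n u' w'"
  unfolding skew_form_def using assms by (intro sum.cong refl) auto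

lemma skew_form_linear_left:
  "skew_form n (\<lambda>i. c * u i + d * u' i) w = c * skew_form n u w + d * skew_form n u' w"
  unfolding skew_form_def sum_distrib_left sum.distrib[symmetric]
  by (intro sum.cong refl) (simp add: algebra_simps)

lemma skew_form_linear_right:
  "skew_form n w (\<lambda>i. c * u i + d * u' i) = c * skew_form n w u + d * skew_form n w u'"
  unfolding skew_form_def sum_distrib_left sum.distrib[symmetric]
  by (intro sum.cong refl) (simp add: algebra_simps)

lemma skew_form_scale_left: "skew_form n (\<lambda>i. c * u i) w = c * skew_form n u w"
  using skew_form_linear_left[of n c u 0 u w] by simp

lemma pbracket_antisym: "pbracket n f g x = - pbracket n g f x"
  unfolding pbracket_eq_skew_form by (rule skew_form_antisym)

lemma pbracket_self: "pbracket n f f x = 0"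
  unfolding pbracket_eq_skew_form by (rule skew_form_self)

lemma sum_parity_sign:
  "(\<Sum>i=p..q. parity_sign i) = (if q < p then 0 else if even (q - p) then parity_sign p else 0)"
proof (induction q)
  case 0
  then show ?case by (cases p) auto
next
  case (Suc q)
  consider "Suc q < p" | "p = Suc q" | "p \<le> q" by linarith
  then show ?case
  proof cases
    case 3
    then have "(\<Sum>i=p..Suc q. parity_sign i) = parity_sign (Suc q) + (\<Sum>i=p..q. parity_sign i)"
      by (simp add: atLeastAtMostSuc_conv)
    also have "\<dots> = (if even (Suc q - p) then parity_sign p else 0)"
      using Suc 3 unfolding parity_sign_def by (auto; presburger)
    finally show ?thesis using 3 by simp
  qed simp_all
qed

lemma sum_parity_sign_even_length: "(\<Sum>j=1..2*k. parity_sign j) = 0"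
  unfolding sum_parity_sign by (auto simp: parity_sign_def)

lemma skew_column_alt_exp:
  assumes "1 \<le> lo" "hi \<le> n" "1 \<le> j"
  shows "skew_column n (alt_exp lo hi) j
    = (\<Sum>i=lo..min hi (j-1). parity_sign i) - (\<Sum>i=max lo (Suc j)..hi. parity_sign i)"
proof -
  have "skew_column n (alt_exp lo hi) j = (\<Sum>i=lo..hi. order_sign i j * parity_sign i)"
    unfolding skew_column_def
    by (rule sum.mono_neutral_cong_right) (use assms in \<open>auto simp: alt_exp_def\<close>)
  also have "\<dots> = (\<Sum>i=lo..hi. (if i < j then parity_sign i else 0))
      - (\<Sum>i=lo..hi. (if j < i then parity_sign i else 0))"
    unfolding sum_subtractf[symmetric] by (rule sum.cong) (auto simp: order_sign_def)
  also have "(\<Sum>i=lo..hi. (if i < j then parity_sign i else 0)) = (\<Sum>i=lo..min hi (j-1). parity_sign i)"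
    by (rule sum.mono_neutral_cong_right) (use assms in auto)
  also have "(\<Sum>i=lo..hi. (if j < i then parity_sign i else 0)) = (\<Sum>i=max lo (Suc j)..hi. parity_sign i)"
    by (rule sum.mono_neutral_cong_right) (use assms in auto)
  finally show ?thesis .
qed

lemma skew_form_alt_exp_full:
  assumes "odd n"
  shows "skew_form n (alt_exp 1 n) w = 0"
proof -
  have "skew_column n (alt_exp 1 n) j = 0" if "j \<in> {1..n}" for j
  proof -
    have e: "skew_column n (alt_exp 1 n) j
        = (\<Sum>i=1..min n (j-1). parity_sign i) - (\<Sum>i=max 1 (Suc j)..n. parity_sign i)"
      by (rule skew_column_alt_exp) (use that in auto)
    show ?thesis unfolding e sum_parity_sign parity_sign_def using assms that
      by (auto simp: max_def min_def; presburger)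
  qed
  then show ?thesis unfolding skew_form_eq_column_sum by simp
qed

lemma skew_form_alt_exp_prefix:
  assumes "2*k \<le> n"
  shows "skew_form n (alt_exp 1 (2*k)) w = (\<Sum>j=1..2*k. w j)"
proof -
  have "skew_column n (alt_exp 1 (2*k)) j = (if j \<le> 2*k then 1 else 0)" if "j \<in> {1..n}" for j
  proof -
    have e: "skew_column n (alt_exp 1 (2*k)) j
        = (\<Sum>i=1..min (2*k) (j-1). parity_sign i) - (\<Sum>i=max 1 (Suc j)..2*k. parity_sign i)"
      by (rule skew_column_alt_exp) (use assms that in auto)
    show ?thesis unfolding e sum_parity_sign parity_sign_def using assms that
      by (auto simp: max_def min_def; presburger)
  qed
  then show ?thesis unfolding skew_form_eq_column_sum
    by (intro sum.mono_neutral_cong_right) (use assms in auto)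
qed

lemma skew_form_alt_exp_suffix:
  assumes "odd n" "1 \<le> l" "2*l \<le> n"
  shows "skew_form n (alt_exp (2*l) n) w = - (\<Sum>j=2*l..n. w j)"
proof -
  have "skew_column n (alt_exp (2*l) n) j = (if 2*l \<le> j then -1 else 0)" if "j \<in> {1..n}" for j
  proof -
    have e: "skew_column n (alt_exp (2*l) n) j
        = (\<Sum>i=2*l..min n (j-1). parity_sign i) - (\<Sum>i=max (2*l) (Suc j)..n. parity_sign i)"
      by (rule skew_column_alt_exp) (use assms that in auto)
    show ?thesis unfolding e sum_parity_sign parity_sign_def using assms that
      by (auto simp: max_def min_def; presburger)
  qed
  then have "skew_form n (alt_exp (2*l) n) w = (\<Sum>j=2*l..n. - w j)"
    unfolding skew_form_eq_column_sum
    by (intro sum.mono_neutral_cong_right) (use assms in auto)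
  then show ?thesis by (simp add: sum_negf)
qed

lemma skew_column_vv_terms_above:
  assumes "p \<le> n" "p < j"
  shows "skew_column n (vv_terms a p x) j = vv a p x"
  unfolding skew_column_def vv_def
  by (rule sum.mono_neutral_cong_right) (use assms in \<open>auto simp: vv_terms_def order_sign_def\<close>)

lemma sum_vv_terms:
  assumes "1 \<le> lo"
  shows "(\<Sum>j=lo..hi. vv_terms a q x j) = (\<Sum>j=lo..min hi q. a j * x j)"
  by (rule sum.mono_neutral_cong_right) (use assms in \<open>auto simp: vv_terms_def\<close>)

lemma vv_split:
  assumes "p \<le> q"
  shows "vv a q x = vv a p x + (\<Sum>j=Suc p..q. a j * x j)"
proof -
  have "{1..q} = {1..p} \<union> {Suc p..q}" using assms by auto
  then show ?thesis unfolding vv_def by (simp add: sum.union_disjoint)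
qed

lemma skew_form_vv_terms:
  assumes "p \<le> q" "q \<le> n"
  shows "skew_form n (vv_terms a p x) (vv_terms a q x) = vv a p x * (vv a q x - vv a p x)"
proof -
  define d where "d i = (if p < i \<and> i \<le> q then a i * x i else 0)" for i
  have "vv_terms a q x = (\<lambda>i. 1 * vv_terms a p x i + 1 * d i)"
    by (rule ext) (use assms in \<open>auto simp: vv_terms_def d_def\<close>)
  then have "skew_form n (vv_terms a p x) (vv_terms a q x)
      = skew_form n (vv_terms a p x) (vv_terms a p x) + skew_form n (vv_terms a p x) d"
    using skew_form_linear_right[of n "vv_terms a p x" 1 "vv_terms a p x" 1 d] by simp
  also have "skew_form n (vv_terms a p x) d = (\<Sum>j=Suc p..q. vv a p x * (a j * x j))"
    unfolding skew_form_eq_column_sum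
    by (rule sum.mono_neutral_cong_right) (use assms in \<open>auto simp: d_def skew_column_vv_terms_above\<close>)
  also have "\<dots> = vv a p x * (vv a q x - vv a p x)"
    using vv_split[OF assms(1), of a x] by (simp add: sum_distrib_left)
  finally show ?thesis by (simp add: skew_form_self)
qed

section \<open>Involutivity\<close>

lemma pbracket_CC_left:
  assumes "x \<in> torus n" "odd n"
  shows "pbracket n (CC n) g x = 0"
proof -
  have "pbracket n (CC n) g x = skew_form n (\<lambda>i. CC n x * alt_exp 1 n i) (log_grad g x)"
    unfolding pbracket_eq_skew_form
    by (rule skew_form_cong) (use log_grad_CC torus_coord_nonzero[OF assms(1)] assms(2) in auto)
  then show ?thesis unfolding skew_form_scale_left skew_form_alt_exp_full[OF assms(2)] by simp
qed

lemma pbracket_JJ_left: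
  assumes "x \<in> torus n" "2*k \<le> n"
  shows "pbracket n (JJ k) g x = JJ k x * (\<Sum>j=1..2*k. log_grad g x j)"
proof -
  have "pbracket n (JJ k) g x = skew_form n (\<lambda>i. JJ k x * alt_exp 1 (2*k) i) (log_grad g x)"
    unfolding pbracket_eq_skew_form
    by (rule skew_form_cong) (use log_grad_JJ torus_coord_nonzero[OF assms(1)] in auto)
  then show ?thesis unfolding skew_form_scale_left skew_form_alt_exp_prefix[OF assms(2)] .
qed

lemma prefix_euler_JJ:
  assumes "x \<in> torus n" "2*k \<le> n" "2*l \<le> n"
  shows "(\<Sum>j=1..2*k. log_grad (JJ l) x j) = 0"
proof -
  have "(\<Sum>j=1..2*k. log_grad (JJ l) x j) = JJ l x * (\<Sum>j=1..2*k. alt_exp 1 (2*l) j)"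
    unfolding sum_distrib_left
    by (rule sum.cong) (use log_grad_JJ torus_coord_nonzero[OF assms(1)] assms in auto)
  also have "(\<Sum>j=1..2*k. alt_exp 1 (2*l) j) = (\<Sum>j=1..2*min k l. parity_sign j)"
    by (rule sum.mono_neutral_cong_right) (auto simp: alt_exp_def)
  finally show ?thesis unfolding sum_parity_sign_even_length by simp
qed

lemma prefix_euler_CC:
  assumes "x \<in> torus n" "2*k \<le> n" "odd n"
  shows "(\<Sum>j=1..2*k. log_grad (CC n) x j) = 0"
proof -
  have "(\<Sum>j=1..2*k. log_grad (CC n) x j) = CC n x * (\<Sum>j=1..2*k. parity_sign j)"
    unfolding sum_distrib_left
    by (rule sum.cong) (use log_grad_CC torus_coord_nonzero[OF assms(1)] assms in \<open>auto simp: alt_exp_def\<close>)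
  then show ?thesis unfolding sum_parity_sign_even_length by simp
qed

lemma prefix_euler_HH:
  assumes "\<And>j. 1 \<le> j \<Longrightarrow> j \<le> 2*k \<Longrightarrow> a j = 0"
  shows "(\<Sum>j=1..2*k. log_grad (HH a n) x j) = 0"
  using assms by (intro sum.neutral) (auto simp: log_grad_HH vv_terms_def)

lemma prefix_euler_FF:
  assumes "x \<in> torus n" "odd n" "2*k \<le> n" "k < l"
    and "\<And>j. 1 \<le> j \<Longrightarrow> j \<le> 2*k \<Longrightarrow> a j = 0"
  shows "(\<Sum>j=1..2*k. log_grad (FF a n l) x j) = 0"
  using assms
  by (intro sum.neutral) (auto simp: log_grad_FF torus_coord_nonzero alt_exp_def vv_terms_def)

lemma pbracket_HH_FF:
  assumes "x \<in> torus n" "odd n" "1 \<le> l" "2*l \<le> n"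
  shows "pbracket n (HH a n) (FF a n l) x = 0"
proof -
  let ?q = "2*l-1"
  have "pbracket n (HH a n) (FF a n l) x = skew_form n (vv_terms a n x)
      (\<lambda>i. FF_monomial n l x * vv_terms a ?q x i + FF a n l x * alt_exp (2*l) n i)"
    unfolding pbracket_eq_skew_form log_grad_HH
    by (rule skew_form_cong) (use log_grad_FF torus_coord_nonzero[OF assms(1)] assms in auto)
  also have "\<dots> = FF_monomial n l x * skew_form n (vv_terms a n x) (vv_terms a ?q x)
      + FF a n l x * skew_form n (vv_terms a n x) (alt_exp (2*l) n)"
    by (rule skew_form_linear_right)
  also have "skew_form n (vv_terms a n x) (vv_terms a ?q x) = - (vv a ?q x * (vv a n x - vv a ?q x))"
    using skew_form_antisym[of n "vv_terms a n x"] skew_form_vv_terms[of ?q n n a x] assms by simp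
  also have "skew_form n (vv_terms a n x) (alt_exp (2*l) n) = (\<Sum>j=2*l..n. vv_terms a n x j)"
    using skew_form_antisym[of n "vv_terms a n x"] skew_form_alt_exp_suffix[OF assms(2,3,4)] by simp
  also have "\<dots> = vv a n x - vv a ?q x"
    using sum_vv_terms[of "2*l" a n x n] vv_split[of ?q n a x] assms by simp
  finally show ?thesis unfolding FF_eq_vv_times_monomial by (simp add: algebra_simps)
qed

lemma pbracket_FF_FF:
  assumes "x \<in> torus n" "odd n" "1 \<le> k" "k < l" "2*l \<le> n"
  shows "pbracket n (FF a n k) (FF a n l) x = 0"
proof -
  let ?p = "2*k-1" and ?q = "2*l-1"
  have "pbracket n (FF a n k) (FF a n l) x
      = skew_form n (\<lambda>i. FF_monomial n k x * vv_terms a ?p x i + FF a n k x * alt_exp (2*k) n i)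
              (\<lambda>i. FF_monomial n l x * vv_terms a ?q x i + FF a n l x * alt_exp (2*l) n i)"
    unfolding pbracket_eq_skew_form
    by (rule skew_form_cong) (use log_grad_FF torus_coord_nonzero[OF assms(1)] assms in auto)
  also have "\<dots> = FF_monomial n k x * (FF_monomial n l x * skew_form n (vv_terms a ?p x) (vv_terms a ?q x)
        + FF a n l x * skew_form n (vv_terms a ?p x) (alt_exp (2*l) n))
      + FF a n k x * (FF_monomial n l x * skew_form n (alt_exp (2*k) n) (vv_terms a ?q x)
        + FF a n l x * skew_form n (alt_exp (2*k) n) (alt_exp (2*l) n))"
    unfolding skew_form_linear_left skew_form_linear_right ..
  also have "skew_form n (vv_terms a ?p x) (vv_terms a ?q x) = vv a ?p x * (vv a ?q x - vv a ?p x)"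
    using skew_form_vv_terms[of ?p ?q n a x] assms by simp
  also have "skew_form n (vv_terms a ?p x) (alt_exp (2*l) n) = 0"
  proof -
    have "skew_form n (vv_terms a ?p x) (alt_exp (2*l) n) = (\<Sum>j=2*l..n. vv_terms a ?p x j)"
      using skew_form_antisym[of n "vv_terms a ?p x"] skew_form_alt_exp_suffix[OF assms(2) _ assms(5)]
        assms by simp
    also have "\<dots> = 0" using assms by (intro sum.neutral) (auto simp: vv_terms_def)
    finally show ?thesis .
  qed
  also have "skew_form n (alt_exp (2*k) n) (vv_terms a ?q x) = - (vv a ?q x - vv a ?p x)"
  proof -
    have "skew_form n (alt_exp (2*k) n) (vv_terms a ?q x) = - (\<Sum>j=2*k..n. vv_terms a ?q x j)"
      using skew_form_alt_exp_suffix[OF assms(2,3)] assms by simp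
    also have "(\<Sum>j=2*k..n. vv_terms a ?q x j) = (\<Sum>j=Suc ?p..?q. a j * x j)"
      using sum_vv_terms[of "2*k" a ?q x n] assms by (simp add: min_def)
    also have "\<dots> = vv a ?q x - vv a ?p x" using vv_split[of ?p ?q a x] assms by simp
    finally show ?thesis .
  qed
  also have "skew_form n (alt_exp (2*k) n) (alt_exp (2*l) n) = 0"
  proof -
    have "skew_form n (alt_exp (2*k) n) (alt_exp (2*l) n) = - (\<Sum>j=2*k..n. alt_exp (2*l) n j)"
      using skew_form_alt_exp_suffix[OF assms(2,3)] assms by simp
    also have "(\<Sum>j=2*k..n. alt_exp (2*l) n j) = (\<Sum>j=2*l..n. parity_sign j)"
      by (rule sum.mono_neutral_cong_right) (use assms in \<open>auto simp: alt_exp_def\<close>)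
    also have "\<dots> = 0" unfolding sum_parity_sign using assms by (auto simp: parity_sign_def; presburger)
    finally show ?thesis by simp
  qed
  finally show ?thesis unfolding FF_eq_vv_times_monomial by (simp add: algebra_simps)
qed

lemma fam_length:
  assumes "lam < (n-1) div 2"
  shows "length (fam a n lam) = (n-1) div 2 + 1"
  using assms by (simp add: fam_def; arith)

lemma fam_nth:
  assumes "lam < (n-1) div 2" "p \<le> (n-1) div 2"
  shows "fam a n lam ! p = (if p < lam then JJ (p+1) else if p = lam then HH a n
     else if p < (n-1) div 2 then FF a n (p+1) else CC n)"
proof -
  let ?m = "(n-1) div 2"
  let ?xs = "map JJ [1..<lam + 1]" and ?ys = "map (FF a n) [lam + 2..<?m + 1]"
  have f: "fam a n lam = ?xs @ (HH a n # (?ys @ [CC n]))" by (simp add: fam_def)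
  have lx: "length ?xs = lam" by simp
  have ly: "length ?ys = ?m - lam - 1" by (simp; arith)
  show ?thesis
  proof (cases "p < lam")
    case True
    have "?xs ! p = JJ (1 + p)" using True by (simp del: upt_Suc add: nth_map)
    moreover have "fam a n lam ! p = ?xs ! p" unfolding f using True lx by (simp only: nth_append) simp
    ultimately show ?thesis using True by simp
  next
    case False
    then have "fam a n lam ! p = (HH a n # (?ys @ [CC n])) ! (p - lam)"
      unfolding f using lx by (simp del: upt_Suc add: nth_append)
    also have "\<dots> = (if p = lam then HH a n else (?ys @ [CC n]) ! (p - lam - 1))"
      using False by (cases "p - lam") (auto simp del: upt_Suc)
    also have "\<dots> = (if p = lam then HH a n else if p < ?m then FF a n (p+1) else CC n)"
      using False assms ly by (auto simp del: upt_Suc simp: nth_append)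
    finally show ?thesis using False by simp
  qed
qed

lemma mem_set_famE:
  assumes "f \<in> set (fam a n lam)"
  obtains k where "k \<in> {1..lam}" "f = JJ k"
    | "f = HH a n"
    | k where "k \<in> {lam+2..(n-1) div 2}" "f = FF a n k"
    | "f = CC n"
proof -
  have "f \<in> JJ ` {1..lam} \<or> f = HH a n \<or> f \<in> FF a n ` {lam+2..(n-1) div 2} \<or> f = CC n"
    using assms by (auto simp: fam_def)
  then show ?thesis using that by blast
qed

context
  fixes n lam :: nat and a x :: "nat \<Rightarrow> real"
  assumes x: "x \<in> torus n" and n: "odd n" and lam: "lam < (n-1) div 2"
    and a_zero: "\<And>j. 1 \<le> j \<Longrightarrow> j \<le> 2*lam \<Longrightarrow> a j = 0"
begin

lemma pbracket_JJ_fam: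
  assumes k: "k \<in> {1..lam}" and g: "g \<in> set (fam a n lam)"
  shows "pbracket n (JJ k) g x = 0"
proof -
  have n2: "2 * ((n-1) div 2) + 1 = n" using n by presburger
  have kn: "2*k \<le> n" using k lam n2 by auto
  have az: "\<And>j. 1 \<le> j \<Longrightarrow> j \<le> 2*k \<Longrightarrow> a j = 0" using a_zero k by auto
  from g have "(\<Sum>j=1..2*k. log_grad g x j) = 0"
  proof (cases rule: mem_set_famE)
    case (1 l)
    then show ?thesis using prefix_euler_JJ[OF x kn, of l] lam n2 by auto
  next
    case 2
    then show ?thesis using prefix_euler_HH[OF az] by simp
  next
    case (3 l)
    then show ?thesis using prefix_euler_FF[OF x n kn _ az, of l] k by auto
  next
    case 4
    then show ?thesis using prefix_euler_CC[OF x kn n] by simp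
  qed
  then show ?thesis using pbracket_JJ_left[OF x kn] by simp
qed

lemma pbracket_HH_FF_fam:
  assumes "f \<in> insert (HH a n) (FF a n ` {lam+2..(n-1) div 2})"
    and "g \<in> insert (HH a n) (FF a n ` {lam+2..(n-1) div 2})"
  shows "pbracket n f g x = 0"
proof -
  have n2: "2 * ((n-1) div 2) + 1 = n" using n by presburger
  have HF: "pbracket n (HH a n) (FF a n l) x = 0" if "l \<in> {lam+2..(n-1) div 2}" for l
    using pbracket_HH_FF[OF x n, of l a] that n2 by auto
  have FF: "pbracket n (FF a n k) (FF a n l) x = 0"
    if "k \<in> {lam+2..(n-1) div 2}" "l \<in> {lam+2..(n-1) div 2}" "k < l" for k l
    using pbracket_FF_FF[OF x n, of k l a] that n2 by auto
  show ?thesis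
    using assms HF FF pbracket_antisym[of n f g x] pbracket_self[of n f x]
    by (auto, metis neg_equal_0_iff_equal nat_neq_iff)
qed

lemma pbracket_fam_eq_0:
  assumes f: "f \<in> set (fam a n lam)" and g: "g \<in> set (fam a n lam)"
  shows "pbracket n f g x = 0"
proof -
  let ?E = "insert (HH a n) (FF a n ` {lam+2..(n-1) div 2})"
  have JC: "pbracket n f' g' x = 0" if "f' \<in> set (fam a n lam)" "f' \<notin> ?E" "g' \<in> set (fam a n lam)" for f' g'
    using that(1)
  proof (cases rule: mem_set_famE)
    case (1 k)
    then show ?thesis using pbracket_JJ_fam that(3) by simp
  next
    case 4
    then show ?thesis using pbracket_CC_left[OF x n] by simp
  qed (use that(2) in auto)
  show ?thesis
  proof (cases "f \<in> ?E \<and> g \<in> ?E")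
    case True
    then show ?thesis using pbracket_HH_FF_fam by blast
  next
    case False
    then show ?thesis using JC[OF f _ g] JC[OF g _ f] pbracket_antisym[of n f g x] by auto
  qed
qed

end

section \<open>Generic points\<close>

definition linear_form :: "nat \<Rightarrow> (nat \<Rightarrow> real) \<Rightarrow> (nat \<Rightarrow> real) \<Rightarrow> real" where
  "linear_form n M x = (\<Sum>i=1..n. M i * x i)"

definition nonvanishing_set :: "nat \<Rightarrow> (nat \<Rightarrow> real) set \<Rightarrow> (nat \<Rightarrow> real) set" where
  "nonvanishing_set n S = {x \<in> Rn n. \<forall>M\<in>S. linear_form n M x \<noteq> 0}"

lemma linear_form_affine:
  "linear_form n M (\<lambda>i. u i + t * z i) = linear_form n M u + t * linear_form n M z"
  unfolding linear_form_def by (simp add: algebra_simps sum.distrib sum_distrib_left)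

lemma continuous_on_linear_form: "continuous_on UNIV (linear_form n M)"
  unfolding linear_form_def
  by (intro continuous_on_sum continuous_on_mult_left continuous_on_product_coordinates)

lemma openin_nonvanishing_set:
  assumes "finite S"
  shows "openin (top_of_set (Rn n)) (nonvanishing_set n S)"
proof -
  have "nonvanishing_set n S = Rn n \<inter> (\<Inter>M\<in>S. {x. linear_form n M x \<noteq> 0})"
    unfolding nonvanishing_set_def by auto
  moreover have "open (\<Inter>M\<in>S. {x. linear_form n M x \<noteq> 0})"
    using assms
    by (intro open_INT ballI open_Collect_neq continuous_on_linear_form continuous_on_const) auto
  ultimately show ?thesis by auto
qed

text \<open>A point off finitely many hyperplanes exists because each line meets a hyperplane
  not containing it in at most one point.\<close>

lemma nonvanishing_set_nonempty:
  assumes "finite S" "\<forall>M\<in>S. \<exists>i\<in>{1..n}. M i \<noteq> 0"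
  shows "nonvanishing_set n S \<noteq> {}"
  using assms
proof (induction S rule: finite_induct)
  case empty
  have "(\<lambda>i. 0) \<in> Rn n" by (simp add: Rn_def)
  then show ?case by (auto simp: nonvanishing_set_def)
next
  case (insert M S)
  then obtain u where u: "u \<in> Rn n" "\<forall>M'\<in>S. linear_form n M' u \<noteq> 0"
    by (auto simp: nonvanishing_set_def)
  define z where "z i = (if i \<in> {1..n} then M i else 0)" for i
  have zR: "z \<in> Rn n" by (auto simp: Rn_def z_def)
  obtain i0 where i0: "i0 \<in> {1..n}" "M i0 \<noteq> 0" using insert.prems by auto
  have "linear_form n M z = (\<Sum>i=1..n. (M i)^2)"
    unfolding linear_form_def z_def by (simp add: power2_eq_square)
  also have "\<dots> > 0" by (rule sum_pos2[of _ i0]) (use i0 in auto)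
  finally have Mz: "linear_form n M z \<noteq> 0" by simp
  define B where "B = insert (- linear_form n M u / linear_form n M z)
    ((\<lambda>M'. - linear_form n M' u / linear_form n M' z) ` S)"
  have "finite B" using insert.hyps by (simp add: B_def)
  then obtain t :: real where t: "t \<notin> B" using ex_new_if_finite[OF infinite_UNIV_char_0] by blast
  define w where "w i = u i + t * z i" for i
  have "w \<in> Rn n" using u(1) zR by (auto simp: Rn_def w_def)
  moreover have "linear_form n M' w \<noteq> 0" if "M' \<in> insert M S" for M'
  proof
    assume "linear_form n M' w = 0"
    then have e: "linear_form n M' u + t * linear_form n M' z = 0"
      unfolding w_def linear_form_affine .
    then have "linear_form n M' z \<noteq> 0" using u(2) that Mz by auto
    then have "t = - linear_form n M' u / linear_form n M' z" using e by (simp add: field_simps)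
    then show False using t that by (auto simp: B_def)
  qed
  ultimately show ?case by (auto simp: nonvanishing_set_def)
qed

lemma dense_nonvanishing_set:
  assumes "finite S" "\<forall>M\<in>S. \<exists>i\<in>{1..n}. M i \<noteq> 0"
  shows "Rn n \<subseteq> closure (nonvanishing_set n S)"
proof
  fix y assume y: "y \<in> Rn n"
  obtain u where u: "u \<in> Rn n" "\<forall>M\<in>S. linear_form n M u \<noteq> 0"
    using nonvanishing_set_nonempty[OF assms] by (auto simp: nonvanishing_set_def)
  define \<phi> where "\<phi> t = (\<lambda>i. y i + t * u i)" for t :: real
  define B where "B = (\<lambda>M. - linear_form n M y / linear_form n M u) ` S"
  have fB: "finite B" using assms(1) by (simp add: B_def)
  have "\<phi> ` (- B) \<subseteq> nonvanishing_set n S"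
  proof safe
    fix t assume t: "t \<notin> B"
    show "\<phi> t \<in> nonvanishing_set n S" unfolding nonvanishing_set_def
    proof (intro CollectI conjI ballI notI)
      show "\<phi> t \<in> Rn n" using y u(1) by (auto simp: Rn_def \<phi>_def)
      fix M assume M: "M \<in> S" "linear_form n M (\<phi> t) = 0"
      then have "linear_form n M y + t * linear_form n M u = 0"
        unfolding \<phi>_def linear_form_affine by simp
      then have "t = - linear_form n M y / linear_form n M u" using u(2) M(1) by (simp add: field_simps)
      then show False using t M(1) by (auto simp: B_def)
    qed
  qed
  then have sub: "\<phi> ` (- B) \<subseteq> closure (nonvanishing_set n S)" using closure_subset by blast
  have cont: "continuous_on (closure (- B)) \<phi>"
    unfolding \<phi>_def by (intro continuous_on_coordinatewise_then_product continuous_intros)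
  have "\<phi> ` closure (- B) \<subseteq> closure (nonvanishing_set n S)"
    by (rule image_closure_subset[OF cont closed_closure sub])
  moreover have "closure (- B) = UNIV"
    unfolding closure_complement using empty_interior_finite[OF fB] by simp
  moreover have "\<phi> 0 = y" by (simp add: \<phi>_def)
  ultimately show "y \<in> closure (nonvanishing_set n S)" by auto
qed

definition generic_point :: "(nat \<Rightarrow> real) \<Rightarrow> nat \<Rightarrow> nat \<Rightarrow> (nat \<Rightarrow> real) \<Rightarrow> bool" where
  "generic_point a n lam x \<longleftrightarrow> x \<in> torus n
     \<and> (\<forall>p. lam < p \<and> p < (n-1) div 2 \<longrightarrow> vv a (2*(p+1)-1) x \<noteq> 0)
     \<and> (\<forall>q\<in>{lam+1..(n-1) div 2}. a (2*q) * x (2*q) + a (2*q+1) * x (2*q+1) = 0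
          \<longrightarrow> a (2*q) = 0 \<and> a (2*q+1) = 0)"

definition generic_forms :: "(nat \<Rightarrow> real) \<Rightarrow> nat \<Rightarrow> nat \<Rightarrow> (nat \<Rightarrow> real) set" where
  "generic_forms a n lam =
     {M \<in> (\<lambda>i j. if j = i then 1 else 0) ` {1..n}
        \<union> (\<lambda>p j. if 1 \<le> j \<and> j \<le> 2*(p+1)-1 then a j else 0) ` {lam<..<(n-1) div 2}
        \<union> (\<lambda>q j. if j = 2*q \<or> j = 2*q+1 then a j else 0) ` {lam+1..(n-1) div 2}.
      \<exists>i\<in>{1..n}. M i \<noteq> 0}"

lemma finite_generic_forms: "finite (generic_forms a n lam)"
  unfolding generic_forms_def by auto

context
  fixes n lam L :: nat and a :: "nat \<Rightarrow> real"
  assumes n: "odd n" and aL: "a (L+1) \<noteq> 0" and L_le: "L + 2 \<le> n"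
    and lam_L: "2*lam \<le> L" "L \<le> 2*lam + 1"
begin

lemma nonvanishing_subset_torus: "nonvanishing_set n (generic_forms a n lam) \<subseteq> torus n"
proof
  fix x assume x: "x \<in> nonvanishing_set n (generic_forms a n lam)"
  show "x \<in> torus n" unfolding torus_def
  proof (intro CollectI conjI ballI)
    show "x \<in> Rn n" using x by (simp add: nonvanishing_set_def)
    fix i assume i: "i \<in> {1..n}"
    let ?e = "\<lambda>j. if j = i then 1 else 0 :: real"
    have "?e \<in> generic_forms a n lam" unfolding generic_forms_def using i by auto
    then have "linear_form n ?e x \<noteq> 0" using x by (simp add: nonvanishing_set_def)
    moreover have "linear_form n ?e x = x i" unfolding linear_form_def
      by (subst sum.cong[OF refl, of _ _ "\<lambda>j. if j = i then x j else 0"]) (use i in auto)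
    ultimately show "x i \<noteq> 0" by simp
  qed
qed

lemma nonvanishing_vv:
  assumes x: "x \<in> nonvanishing_set n (generic_forms a n lam)" and p: "lam < p" "p < (n-1) div 2"
  shows "vv a (2*(p+1)-1) x \<noteq> 0"
proof -
  let ?M = "\<lambda>j. if 1 \<le> j \<and> j \<le> 2*(p+1)-1 then a j else 0"
  have n2: "2 * ((n-1) div 2) + 1 = n" using n by presburger
  have "?M \<in> generic_forms a n lam" unfolding generic_forms_def using p n2 aL lam_L L_le
    by (auto intro!: bexI[of _ "L+1"])
  then have "linear_form n ?M x \<noteq> 0" using x by (simp add: nonvanishing_set_def)
  moreover have "linear_form n ?M x = vv a (2*(p+1)-1) x"
    unfolding linear_form_def vv_def
    by (rule sum.mono_neutral_cong_right) (use p n2 in auto)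
  ultimately show ?thesis by simp
qed

lemma nonvanishing_pair:
  assumes x: "x \<in> nonvanishing_set n (generic_forms a n lam)" and q: "q \<in> {lam+1..(n-1) div 2}"
    and zero: "a (2*q) * x (2*q) + a (2*q+1) * x (2*q+1) = 0"
  shows "a (2*q) = 0 \<and> a (2*q+1) = 0"
proof -
  let ?M = "\<lambda>j. if j = 2*q \<or> j = 2*q+1 then a j else 0"
  have n2: "2 * ((n-1) div 2) + 1 = n" using n by presburger
  have idx: "2*q \<in> {1..n}" "2*q+1 \<in> {1..n}" using q n2 by auto
  have "linear_form n ?M x = (\<Sum>j\<in>{2*q, 2*q+1}. a j * x j)"
    unfolding linear_form_def by (rule sum.mono_neutral_cong_right) (use idx in auto)
  then have "linear_form n ?M x = 0" using zero by simp
  then have "?M \<notin> generic_forms a n lam" using x by (auto simp: nonvanishing_set_def)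
  then have "\<forall>i\<in>{1..n}. ?M i = 0" unfolding generic_forms_def using q by blast
  then show ?thesis using idx by (metis (full_types))
qed

lemma generic_points_open_dense:
  "\<exists>V. openin (top_of_set (Rn n)) V \<and> Rn n \<subseteq> closure V \<and> V \<subseteq> torus n
     \<and> (\<forall>x\<in>V. generic_point a n lam x)"
proof (intro exI conjI ballI)
  let ?V = "nonvanishing_set n (generic_forms a n lam)"
  have nz: "\<forall>M\<in>generic_forms a n lam. \<exists>i\<in>{1..n}. M i \<noteq> 0"
    unfolding generic_forms_def by blast
  show "openin (top_of_set (Rn n)) ?V" by (rule openin_nonvanishing_set[OF finite_generic_forms])
  show "Rn n \<subseteq> closure ?V" by (rule dense_nonvanishing_set[OF finite_generic_forms nz])
  show "?V \<subseteq> torus n" by (rule nonvanishing_subset_torus)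
  show "generic_point a n lam x" if "x \<in> ?V" for x
    unfolding generic_point_def
    using that nonvanishing_subset_torus nonvanishing_vv nonvanishing_pair by blast
qed

end

section \<open>Functional independence\<close>

lemma prod_coords_nonzero:
  assumes "x \<in> torus n" "\<And>p. p \<in> P \<Longrightarrow> g p \<in> {1..n}"
  shows "(\<Prod>p\<in>P. x (g p)) \<noteq> 0"
  using assms torus_coord_nonzero by (cases "finite P") (auto simp: prod_zero_iff)

lemma JJ_nonzero:
  assumes x: "x \<in> torus n" and k: "2*k \<le> n"
  shows "JJ k x \<noteq> 0"
proof -
  have "(\<Prod>p=1..k. x (2*p-1)) \<noteq> 0" by (rule prod_coords_nonzero[OF x]) (use k in auto)
  moreover have "(\<Prod>p=1..k. x (2*p)) \<noteq> 0" by (rule prod_coords_nonzero[OF x]) (use k in auto)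
  ultimately show ?thesis unfolding JJ_def by simp
qed

lemma FF_monomial_nonzero:
  assumes x: "x \<in> torus n" and n: "odd n" and k: "1 \<le> k"
  shows "FF_monomial n k x \<noteq> 0"
proof -
  have n2: "2 * ((n-1) div 2) + 1 = n" using n by presburger
  have "(\<Prod>p=k..(n-1) div 2. x (2*p+1)) \<noteq> 0" by (rule prod_coords_nonzero[OF x]) (use n2 in auto)
  moreover have "(\<Prod>p=k..(n-1) div 2. x (2*p)) \<noteq> 0"
    by (rule prod_coords_nonzero[OF x]) (use n2 k in auto)
  ultimately show ?thesis unfolding FF_monomial_def by simp
qed

lemma CC_nonzero:
  assumes x: "x \<in> torus n" and n: "odd n"
  shows "CC n x \<noteq> 0"
proof -
  have n2: "2 * ((n-1) div 2) + 1 = n" using n by presburger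
  have "(\<Prod>p=0..(n-1) div 2. x (2*p+1)) \<noteq> 0" by (rule prod_coords_nonzero[OF x]) (use n2 in auto)
  moreover have "(\<Prod>p=1..(n-1) div 2. x (2*p)) \<noteq> 0" by (rule prod_coords_nonzero[OF x]) (use n2 in auto)
  ultimately show ?thesis unfolding CC_def by simp
qed

locale fam_relation =
  fixes n m lam L :: nat and a x c :: "nat \<Rightarrow> real"
  assumes n_eq: "n = 2*m + 1" and lam_less: "lam < m"
    and aL: "a (L+1) \<noteq> 0" and L_le: "L + 1 \<le> n" and lam_L: "2*lam \<le> L" "L \<le> 2*lam + 1"
    and generic: "generic_point a n lam x"
    and relation: "\<And>i. i \<in> {1..n} \<Longrightarrow> (\<Sum>p<m+1. c p * pd (fam a n lam ! p) i x) = 0"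
begin

lemma half_eq: "(n-1) div 2 = m"
  using n_eq by simp

lemma odd_n: "odd n"
  using n_eq by simp

lemma x_torus: "x \<in> torus n"
  using generic by (simp add: generic_point_def)

definition fam_grad :: "nat \<Rightarrow> nat \<Rightarrow> real" where
  "fam_grad p i = (if p < lam then JJ (p+1) x * alt_exp 1 (2*(p+1)) i
     else if p = lam then vv_terms a n x i
     else if p < m then FF_monomial n (p+1) x * vv_terms a (2*(p+1)-1) x i
                        + FF a n (p+1) x * alt_exp (2*(p+1)) n i
     else CC n x * alt_exp 1 n i)"

lemma log_grad_fam_nth:
  assumes p: "p \<le> m" and i: "i \<in> {1..n}"
  shows "log_grad (fam a n lam ! p) x i = fam_grad p i"
proof -
  have xi: "x i \<noteq> 0" using torus_coord_nonzero[OF x_torus i] .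
  show ?thesis
    using fam_nth[of lam n p a, unfolded half_eq] lam_less p
    by (simp add: fam_grad_def log_grad_JJ[where x=x and i=i, OF xi] log_grad_HH
        log_grad_FF[where x=x and i=i, OF xi odd_n] log_grad_CC[where x=x and i=i, OF xi odd_n])
qed

lemma relation_fam_grad:
  assumes i: "i \<in> {1..n}"
  shows "(\<Sum>p<m+1. c p * fam_grad p i) = 0"
proof -
  have "(\<Sum>p<m+1. c p * fam_grad p i) = x i * (\<Sum>p<m+1. c p * pd (fam a n lam ! p) i x)"
    unfolding sum_distrib_left
    by (rule sum.cong) (use log_grad_fam_nth i in \<open>auto simp: log_grad_def\<close>)
  then show ?thesis using relation[OF i] by simp
qed

text \<open>At the coordinates \<open>2j\<close> and \<open>2j+1\<close> (\<open>j > \<lambda>\<close>) the relation splits into a multiple of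
  \<open>a\<^sub>i x\<^sub>i\<close>, coming from the \<open>v\<close>-factors, and a part coming from the alternating monomials,
  which enters the two coordinates with opposite signs.\<close>

definition vv_coeff :: "nat \<Rightarrow> real" where
  "vv_coeff j = (\<Sum>p<m+1. if p = lam then c lam
     else if lam < p \<and> p < m \<and> j \<le> p then c p * FF_monomial n (p+1) x else 0)"

definition alt_coeff :: "nat \<Rightarrow> real" where
  "alt_coeff j = (\<Sum>p<m+1. if p = m then c m * CC n x
     else if lam < p \<and> p < m \<and> p < j then c p * FF a n (p+1) x else 0)"

lemma coord_le: "j \<le> m \<Longrightarrow> 2*j+1 \<le> n"
  using n_eq by simp

lemma relation_odd_coord:
  assumes "lam+1 \<le> j" "j \<le> m"
  shows "(\<Sum>p<m+1. c p * fam_grad p (2*j+1)) = a (2*j+1) * x (2*j+1) * vv_coeff j + alt_coeff j"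
  unfolding vv_coeff_def alt_coeff_def sum_distrib_left sum.distrib[symmetric]
  by (rule sum.cong)
    (use assms coord_le[OF assms(2)] lam_less in \<open>auto simp: fam_grad_def alt_exp_def parity_sign_def vv_terms_def algebra_simps\<close>)

lemma relation_even_coord:
  assumes "lam+1 \<le> j" "j \<le> m"
  shows "(\<Sum>p<m+1. c p * fam_grad p (2*j)) = a (2*j) * x (2*j) * vv_coeff j - alt_coeff j"
  unfolding vv_coeff_def alt_coeff_def sum_distrib_left sum_subtractf[symmetric]
  by (rule sum.cong)
    (use assms coord_le[OF assms(2)] lam_less in \<open>auto simp: fam_grad_def alt_exp_def parity_sign_def vv_terms_def algebra_simps\<close>)

lemma alt_coeff_eq_0:
  assumes j: "lam+1 \<le> j" "j \<le> m"
  shows "alt_coeff j = 0"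
proof -
  have i: "2*j+1 \<in> {1..n}" "2*j \<in> {1..n}" using j n_eq by auto
  have odd: "a (2*j+1) * x (2*j+1) * vv_coeff j + alt_coeff j = 0"
    using relation_fam_grad[OF i(1)] relation_odd_coord[OF j] by simp
  have even: "a (2*j) * x (2*j) * vv_coeff j - alt_coeff j = 0"
    using relation_fam_grad[OF i(2)] relation_even_coord[OF j] by simp
  have "(a (2*j) * x (2*j) + a (2*j+1) * x (2*j+1)) * vv_coeff j = 0"
    using odd even by (simp add: algebra_simps)
  then have "vv_coeff j = 0 \<or> (a (2*j) = 0 \<and> a (2*j+1) = 0)"
    using generic j half_eq by (auto simp: generic_point_def)
  then show ?thesis using odd by auto
qed

lemma coeff_CC: "c m = 0"
proof -
  have "alt_coeff (lam+1) = (\<Sum>p<m+1. if p = m then c m * CC n x else 0)"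
    unfolding alt_coeff_def by (rule sum.cong) auto
  then have "alt_coeff (lam+1) = c m * CC n x" by simp
  then show ?thesis using alt_coeff_eq_0[of "lam+1"] lam_less CC_nonzero[OF x_torus odd_n] by simp
qed

lemma coeff_FF:
  assumes "lam < p" "p < m"
  shows "c p = 0"
  using assms
proof (induction p rule: less_induct)
  case (less p)
  have "alt_coeff (p+1) = (\<Sum>q<m+1. if q = p then c p * FF a n (p+1) x else 0)"
    unfolding alt_coeff_def by (rule sum.cong) (use less coeff_CC in auto)
  then have "c p * FF a n (p+1) x = 0" using alt_coeff_eq_0[of "p+1"] less by simp
  moreover have "FF a n (p+1) x \<noteq> 0"
    using generic less FF_monomial_nonzero[OF x_torus odd_n, of "p+1"] half_eq
    by (auto simp: FF_eq_vv_times_monomial generic_point_def)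
  ultimately show ?case by simp
qed

lemma relation_lower:
  assumes "i \<in> {1..n}"
  shows "(\<Sum>p<lam. c p * JJ (p+1) x * alt_exp 1 (2*(p+1)) i) + c lam * vv_terms a n x i = 0"
proof -
  have "(\<Sum>p<m+1. c p * fam_grad p i)
      = (\<Sum>p<m+1. if p < lam then c p * JJ (p+1) x * alt_exp 1 (2*(p+1)) i else 0)
        + (\<Sum>p<m+1. if p = lam then c lam * vv_terms a n x i else 0)"
    unfolding sum.distrib[symmetric]
    by (rule sum.cong) (use coeff_CC coeff_FF in \<open>auto simp: fam_grad_def not_less less_Suc_eq_le\<close>)
  also have "(\<Sum>p<m+1. if p < lam then c p * JJ (p+1) x * alt_exp 1 (2*(p+1)) i else 0)
      = (\<Sum>p<lam. c p * JJ (p+1) x * alt_exp 1 (2*(p+1)) i)"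
    by (rule sum.mono_neutral_cong_right) (use lam_less in auto)
  finally show ?thesis using relation_fam_grad[OF assms] lam_less by simp
qed

lemma coeff_HH: "c lam = 0"
proof -
  have "(\<Sum>p<lam. c p * JJ (p+1) x * alt_exp 1 (2*(p+1)) (L+1)) = 0"
    using lam_L by (intro sum.neutral) (auto simp: alt_exp_def)
  then have "c lam * (a (L+1) * x (L+1)) = 0"
    using relation_lower[of "L+1"] L_le by (simp add: vv_terms_def)
  moreover have "x (L+1) \<noteq> 0" using torus_coord_nonzero[OF x_torus] L_le by simp
  ultimately show ?thesis using aL by simp
qed

text \<open>Coordinates \<open>2p+2\<close> and \<open>2p+3\<close> cancel the contributions of all \<open>J\<^sub>k\<close> except \<open>J\<^sub>p\<^sub>+\<^sub>1\<close>.\<close>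

lemma coeff_JJ:
  assumes p0: "p0 < lam"
  shows "c p0 = 0"
proof -
  have i: "2*p0+2 \<in> {1..n}" "2*p0+3 \<in> {1..n}" using p0 lam_less n_eq by auto
  have "(\<Sum>p<lam. c p * JJ (p+1) x * alt_exp 1 (2*(p+1)) (2*p0+2))
      + (\<Sum>p<lam. c p * JJ (p+1) x * alt_exp 1 (2*(p+1)) (2*p0+3))
      = (\<Sum>p<lam. if p = p0 then - (c p0 * JJ (p0+1) x) else 0)"
    unfolding sum.distrib[symmetric]
    by (rule sum.cong) (use p0 in \<open>auto simp: alt_exp_def parity_sign_def\<close>)
  then have "c p0 * JJ (p0+1) x = 0"
    using relation_lower[OF i(1)] relation_lower[OF i(2)] coeff_HH p0 by simp
  then show ?thesis using JJ_nonzero[OF x_torus, of "p0+1"] p0 lam_less n_eq by auto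
qed

lemma coeff_eq_0: "p \<le> m \<Longrightarrow> c p = 0"
  using coeff_JJ coeff_HH coeff_FF coeff_CC by (metis le_neq_implies_less linorder_neqE_nat)

end

lemma diffs_indep_fam:
  assumes n: "odd n" and lam: "lam < (n-1) div 2"
    and aL: "a (L+1) \<noteq> 0" and L_le: "L + 1 \<le> n" and lam_L: "2*lam \<le> L" "L \<le> 2*lam + 1"
    and generic: "generic_point a n lam x"
  shows "diffs_indep n (fam a n lam) x"
  unfolding diffs_indep_def fam_length[OF lam]
proof (intro allI impI)
  fix c k assume rel: "\<forall>i\<in>{1..n}. (\<Sum>p<(n-1) div 2 + 1. c p * pd (fam a n lam ! p) i x) = 0"
    and k: "k < (n-1) div 2 + 1"
  interpret fam_relation n "(n-1) div 2" lam L a x c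
    using assms rel by unfold_locales (auto elim!: oddE)
  show "c k = 0" using coeff_eq_0 k by simp
qed

lemma Least_nonzero_coeff:
  fixes a :: "nat \<Rightarrow> real"
  assumes "\<exists>i\<in>{1..n}. a i \<noteq> 0"
  shows "a ((LEAST l. a (l + 1) \<noteq> 0) + 1) \<noteq> 0"
    and "\<And>j. 1 \<le> j \<Longrightarrow> j \<le> (LEAST l. a (l + 1) \<noteq> 0) \<Longrightarrow> a j = 0"
proof -
  obtain i where i: "i \<in> {1..n}" "a i \<noteq> 0" using assms by blast
  show "a ((LEAST l. a (l + 1) \<noteq> 0) + 1) \<noteq> 0"
    by (rule LeastI[of "\<lambda>l. a (l+1) \<noteq> 0" "i-1"]) (use i in simp)
  fix j assume "1 \<le> j" "j \<le> (LEAST l. a (l + 1) \<noteq> 0)"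
  then have "\<not> a (j - 1 + 1) \<noteq> 0" by (intro not_less_Least) auto
  then show "a j = 0" using \<open>1 \<le> j\<close> by simp
qed

theorem theorem2p4:
  fixes n :: nat and a :: "nat \<Rightarrow> real"
  assumes "odd n"
    and "\<exists>i\<in>{1..n}. a i \<noteq> 0"
    and "(LEAST l. a (l + 1) \<noteq> 0) + 2 \<le> n"
  shows "length (fam a n ((LEAST l. a (l + 1) \<noteq> 0) div 2)) = (n + 1) div 2
    \<and> (\<forall>p < length (fam a n ((LEAST l. a (l + 1) \<noteq> 0) div 2)).
         \<forall>q < length (fam a n ((LEAST l. a (l + 1) \<noteq> 0) div 2)).
           \<forall>x \<in> torus n. pbracket n (fam a n ((LEAST l. a (l + 1) \<noteq> 0) div 2) ! p)
                                    (fam a n ((LEAST l. a (l + 1) \<noteq> 0) div 2) ! q) x = 0)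
    \<and> (\<exists>V. openin (top_of_set (Rn n)) V \<and> Rn n \<subseteq> closure V \<and> V \<subseteq> torus n
          \<and> (\<forall>x\<in>V. diffs_indep n (fam a n ((LEAST l. a (l + 1) \<noteq> 0) div 2)) x))"
proof -
  define L where "L = (LEAST l. a (l + 1) \<noteq> 0)"
  define lam where "lam = L div 2"
  have aL: "a (L+1) \<noteq> 0"
    unfolding L_def by (rule Least_nonzero_coeff(1)[OF assms(2)])
  have a_zero: "\<And>j. 1 \<le> j \<Longrightarrow> j \<le> L \<Longrightarrow> a j = 0"
    unfolding L_def by (rule Least_nonzero_coeff(2)[OF assms(2)])
  have L_le: "L + 2 \<le> n" using assms(3) unfolding L_def .
  have lam_L: "2*lam \<le> L" "L \<le> 2*lam + 1" unfolding lam_def by auto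
  have half: "2 * ((n-1) div 2) + 1 = n" using assms(1) by presburger
  have lam: "lam < (n-1) div 2" using lam_L L_le half by linarith
  have length: "length (fam a n lam) = (n + 1) div 2"
    using fam_length[OF lam] half by simp
  have involution: "\<forall>p < length (fam a n lam). \<forall>q < length (fam a n lam). \<forall>x \<in> torus n.
      pbracket n (fam a n lam ! p) (fam a n lam ! q) x = 0"
  proof (intro allI impI ballI)
    fix p q x assume "p < length (fam a n lam)" "q < length (fam a n lam)" "x \<in> torus n"
    then show "pbracket n (fam a n lam ! p) (fam a n lam ! q) x = 0"
      by (intro pbracket_fam_eq_0[where x=x and a=a, OF _ assms(1) lam] nth_mem)
        (use a_zero lam_L in auto)
  qed
  obtain V where V: "openin (top_of_set (Rn n)) V" "Rn n \<subseteq> closure V" "V \<subseteq> torus n"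
      and generic: "\<forall>x\<in>V. generic_point a n lam x"
    using generic_points_open_dense[where a=a and lam=lam, OF assms(1) aL L_le lam_L] by blast
  have independence: "\<forall>x\<in>V. diffs_indep n (fam a n lam) x"
    using generic diffs_indep_fam[where a=a and L=L, OF assms(1) lam aL _ lam_L] L_le by simp
  show ?thesis
    unfolding L_def[symmetric] lam_def[symmetric]
  proof (intro conjI exI[of _ V])
  qed (rule length involution V(1) V(2) V(3) independence)+
qed

end
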